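(* Let $\theta,\theta'\in(0,1)$ with $\theta<\theta'/N$. Then the natural embedding $\iota:F_\theta\to F_{\theta'}$ (with norms $\|\cdot\|_\theta$ and $\|\cdot\|_{\theta'}$) is a nuclear operator.
   Context: $\Sigma_{\mathbf A}^+$ is the one-sided Markov shift on $N$ symbols given by an $N\times N$ zero-one aperiodic matrix $\mathbf A$. For $\theta\in(0,1)$, $d_\theta(\omega,\omega')=\theta^{\min\{m:\omega_m\ne\omega'_m\}}$, $F_\theta$ is the space of complex $d_\theta$-Lipschitz functions with norm $\|\phi\|_\theta=\|\phi\|_\infty+[\phi]_\theta$, $[\phi]_\theta$ the Lipschitz constant; $F_\theta\subset F_{\theta'}$ for $\theta<\theta'$. A bounded operator $T:E\to F$ between Banach spaces is nuclear if $Tx=\sum_n\lambda_n\langle x,x'_n\rangle y_n$ with $(\lambda_n)$ summable and $(x'_n)\subset E'$, $(y_n)\subset F$ bounded. *)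

theory Defs
  imports "HOL-Analysis.Analysis"
begin

text \<open>Symbols are 0..N-1; the N x N zero-one matrix A is a function nat => nat => nat.\<close>

definition zero_one_matrix :: "nat \<Rightarrow> (nat \<Rightarrow> nat \<Rightarrow> nat) \<Rightarrow> bool" where
  "zero_one_matrix N A \<longleftrightarrow> (\<forall>i<N. \<forall>j<N. A i j = 0 \<or> A i j = 1)"

fun mat_pow :: "nat \<Rightarrow> (nat \<Rightarrow> nat \<Rightarrow> nat) \<Rightarrow> nat \<Rightarrow> nat \<Rightarrow> nat \<Rightarrow> nat" where
  "mat_pow N A 0 i j = (if i = j then 1 else 0)"
| "mat_pow N A (Suc m) i j = (\<Sum>k<N. mat_pow N A m i k * A k j)"

definition aperiodic_matrix :: "nat \<Rightarrow> (nat \<Rightarrow> nat \<Rightarrow> nat) \<Rightarrow> bool" where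
  "aperiodic_matrix N A \<longleftrightarrow> (\<exists>M>0. \<forall>i<N. \<forall>j<N. mat_pow N A M i j > 0)"

definition shift_space :: "nat \<Rightarrow> (nat \<Rightarrow> nat \<Rightarrow> nat) \<Rightarrow> (nat \<Rightarrow> nat) set" where
  "shift_space N A = {\<omega>. \<forall>m. \<omega> m < N \<and> A (\<omega> m) (\<omega> (Suc m)) = 1}"

definition dtheta :: "real \<Rightarrow> (nat \<Rightarrow> nat) \<Rightarrow> (nat \<Rightarrow> nat) \<Rightarrow> real" where
  "dtheta \<theta> \<omega> \<omega>' = (if \<omega> = \<omega>' then 0 else \<theta> ^ (LEAST m. \<omega> m \<noteq> \<omega>' m))"

definition sup_norm :: "nat \<Rightarrow> (nat \<Rightarrow> nat \<Rightarrow> nat) \<Rightarrow> ((nat \<Rightarrow> nat) \<Rightarrow> complex) \<Rightarrow> real" where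
  "sup_norm N A \<phi> = Sup (insert 0 ((\<lambda>\<omega>. cmod (\<phi> \<omega>)) ` shift_space N A))"

definition lip_set :: "nat \<Rightarrow> (nat \<Rightarrow> nat \<Rightarrow> nat) \<Rightarrow> real \<Rightarrow> ((nat \<Rightarrow> nat) \<Rightarrow> complex) \<Rightarrow> real set" where
  "lip_set N A \<theta> \<phi> = {cmod (\<phi> \<omega> - \<phi> \<omega>') / dtheta \<theta> \<omega> \<omega>' | \<omega> \<omega>'.
      \<omega> \<in> shift_space N A \<and> \<omega>' \<in> shift_space N A \<and> \<omega> \<noteq> \<omega>'}"

definition lip_const :: "nat \<Rightarrow> (nat \<Rightarrow> nat \<Rightarrow> nat) \<Rightarrow> real \<Rightarrow> ((nat \<Rightarrow> nat) \<Rightarrow> complex) \<Rightarrow> real" where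
  "lip_const N A \<theta> \<phi> = Sup (insert 0 (lip_set N A \<theta> \<phi>))"

definition F_norm :: "nat \<Rightarrow> (nat \<Rightarrow> nat \<Rightarrow> nat) \<Rightarrow> real \<Rightarrow> ((nat \<Rightarrow> nat) \<Rightarrow> complex) \<Rightarrow> real" where
  "F_norm N A \<theta> \<phi> = sup_norm N A \<phi> + lip_const N A \<theta> \<phi>"

definition F_space :: "nat \<Rightarrow> (nat \<Rightarrow> nat \<Rightarrow> nat) \<Rightarrow> real \<Rightarrow> ((nat \<Rightarrow> nat) \<Rightarrow> complex) set" where
  "F_space N A \<theta> = {\<phi>. (\<forall>\<omega>. \<omega> \<notin> shift_space N A \<longrightarrow> \<phi> \<omega> = 0) \<and>
      bdd_above ((\<lambda>\<omega>. cmod (\<phi> \<omega>)) ` shift_space N A) \<and> bdd_above (lip_set N A \<theta> \<phi>)}"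

definition nuclear_op ::
  "('a \<Rightarrow> complex) set \<Rightarrow> (('a \<Rightarrow> complex) \<Rightarrow> real) \<Rightarrow> ('b \<Rightarrow> complex) set \<Rightarrow> (('b \<Rightarrow> complex) \<Rightarrow> real)
   \<Rightarrow> (('a \<Rightarrow> complex) \<Rightarrow> ('b \<Rightarrow> complex)) \<Rightarrow> bool" where
  "nuclear_op E nE F nF T \<longleftrightarrow>
     (\<forall>x\<in>E. T x \<in> F) \<and>
     (\<forall>x\<in>E. \<forall>y\<in>E. T (\<lambda>t. x t + y t) = (\<lambda>t. T x t + T y t)) \<and>
     (\<forall>x\<in>E. \<forall>c::complex. T ((\<lambda>t. c * x t)) = (\<lambda>t. c * T x t)) \<and>
     (\<exists>C. \<forall>x\<in>E. nF (T x) \<le> C * nE x) \<and>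
     (\<exists>(lam :: nat \<Rightarrow> complex) (xs :: nat \<Rightarrow> ('a \<Rightarrow> complex) \<Rightarrow> complex) (ys :: nat \<Rightarrow> 'b \<Rightarrow> complex) C.
        summable (\<lambda>n. cmod (lam n)) \<and>
        (\<forall>n. \<forall>x\<in>E. \<forall>y\<in>E. xs n (\<lambda>t. x t + y t) = xs n x + xs n y) \<and>
        (\<forall>n. \<forall>x\<in>E. \<forall>c. xs n (\<lambda>t. c * x t) = c * xs n x) \<and>
        (\<forall>n. \<forall>x\<in>E. cmod (xs n x) \<le> C * nE x) \<and>
        (\<forall>n. ys n \<in> F \<and> nF (ys n) \<le> C) \<and>
        (\<forall>x\<in>E. (\<lambda>K. nF (\<lambda>t. T x t - (\<Sum>n<K. lam n * xs n x * ys n t))) \<longlonglongrightarrow> 0))"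

end

theory Submission
  imports Defs
begin

text \<open>Choose for every m a point P_m(\<omega>) of the shift space that shares its first m symbols with \<omega>
  and depends only on them. Then \<phi> is the limit of the telescoping series
  \<phi> \<circ> P_0 + \<Sum>_n (\<phi> \<circ> P_(n+1) - \<phi> \<circ> P_n), and the n-th increment is a sum over the N^(n+1)
  cylinders of length n+1 of a number of size at most [\<phi>]_\<theta> \<theta>^n times the indicator of the cylinder.
  Writing that number as (\<theta>/\<theta>')^n \<cdot> x(\<phi>) \<cdot> \<theta>'^n exhibits the inclusion as \<Sum> \<lambda>_i x_i \<otimes> y_i with
  functionals x_i of norm at most \<parallel>\<phi>\<parallel>_\<theta>, vectors y_i = \<theta>'^n times a cylinder indicator, of
  F_\<theta>'-norm at most 2, and weights (\<theta>/\<theta>')^n. Level n contributes N^(n+1) (\<theta>/\<theta>')^n to \<Sum> |\<lambda>_i|,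
  which is therefore finite as N\<theta> < \<theta>'; and a partial sum ending inside level n still samples \<phi> within
  n-cylinders, so it is (\<theta>/\<theta>')^n-close to \<phi> in F_\<theta>'.\<close>

lemma dtheta_pos: "0 < \<theta> \<Longrightarrow> \<omega> \<noteq> \<omega>' \<Longrightarrow> 0 < dtheta \<theta> \<omega> \<omega>'"
  unfolding dtheta_def by simp

lemma dtheta_le_ratio:
  assumes "0 < \<theta>" "\<theta> \<le> \<theta>'" "\<omega> \<noteq> \<omega>'" "\<forall>j<m. \<omega> j = \<omega>' j"
  shows "dtheta \<theta> \<omega> \<omega>' \<le> (\<theta> / \<theta>') ^ m * dtheta \<theta>' \<omega> \<omega>'"
proof -
  define l where "l = (LEAST l. \<omega> l \<noteq> \<omega>' l)"
  have "\<exists>l. \<omega> l \<noteq> \<omega>' l" using assms(3) by auto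
  then have "\<omega> l \<noteq> \<omega>' l" unfolding l_def by (rule LeastI_ex)
  then have "m \<le> l" using assms(4) by (meson not_le)
  have "\<theta> ^ l = (\<theta> / \<theta>') ^ l * \<theta>' ^ l" using assms by (simp add: power_divide)
  also have "\<dots> \<le> (\<theta> / \<theta>') ^ m * \<theta>' ^ l"
    using assms \<open>m \<le> l\<close> by (intro mult_right_mono power_decreasing) auto
  finally show ?thesis using assms(3) unfolding dtheta_def l_def by simp
qed

lemma dtheta_le_power:
  assumes "0 < \<theta>" "\<theta> \<le> 1" "\<forall>j<m. \<omega> j = \<omega>' j"
  shows "dtheta \<theta> \<omega> \<omega>' \<le> \<theta> ^ m"
proof (cases "\<omega> = \<omega>'")
  case False
  from dtheta_le_ratio[OF assms(1,2) False assms(3)] False show ?thesis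
    by (simp add: dtheta_def)
qed (use assms in \<open>simp add: dtheta_def\<close>)

lemma power_le_dtheta:
  assumes "0 < \<theta>" "\<theta> \<le> 1" "j \<le> n" "\<omega> j \<noteq> \<omega>' j"
  shows "\<theta> ^ n \<le> dtheta \<theta> \<omega> \<omega>'"
proof -
  have "(LEAST l. \<omega> l \<noteq> \<omega>' l) \<le> n" using Least_le[of _ j] assms(3,4) by fastforce
  then have "\<theta> ^ n \<le> \<theta> ^ (LEAST l. \<omega> l \<noteq> \<omega>' l)" using assms by (intro power_decreasing) auto
  with assms(4) show ?thesis unfolding dtheta_def by auto
qed

lemma sup_norm_le:
  assumes "0 \<le> a" "\<And>\<omega>. \<omega> \<in> shift_space N A \<Longrightarrow> cmod (g \<omega>) \<le> a"
  shows "bdd_above ((\<lambda>\<omega>. cmod (g \<omega>)) ` shift_space N A)" "0 \<le> sup_norm N A g" "sup_norm N A g \<le> a"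
proof -
  show bdd: "bdd_above ((\<lambda>\<omega>. cmod (g \<omega>)) ` shift_space N A)"
    using assms by (auto intro!: bdd_aboveI[of _ a])
  show "0 \<le> sup_norm N A g" unfolding sup_norm_def using bdd by (intro cSup_upper) auto
  show "sup_norm N A g \<le> a" unfolding sup_norm_def using assms by (intro cSup_least) auto
qed

lemma lip_const_le:
  assumes "0 < \<theta>" "0 \<le> b"
    "\<And>\<omega> \<omega>'. \<omega> \<in> shift_space N A \<Longrightarrow> \<omega>' \<in> shift_space N A \<Longrightarrow> \<omega> \<noteq> \<omega>' \<Longrightarrow>
      cmod (g \<omega> - g \<omega>') \<le> b * dtheta \<theta> \<omega> \<omega>'"
  shows "bdd_above (lip_set N A \<theta> g)" "0 \<le> lip_const N A \<theta> g" "lip_const N A \<theta> g \<le> b"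
proof -
  have ratio: "x \<le> b" if "x \<in> lip_set N A \<theta> g" for x
    using that assms dtheta_pos[OF assms(1)] unfolding lip_set_def
    by (auto simp: pos_divide_le_eq)
  show bdd: "bdd_above (lip_set N A \<theta> g)" using ratio by (intro bdd_aboveI)
  show "0 \<le> lip_const N A \<theta> g" unfolding lip_const_def using bdd by (intro cSup_upper) auto
  show "lip_const N A \<theta> g \<le> b" unfolding lip_const_def using assms ratio by (intro cSup_least) auto
qed

lemma F_norm_le:
  assumes "0 < \<theta>" "0 \<le> a" "0 \<le> b"
    "\<And>\<omega>. \<omega> \<in> shift_space N A \<Longrightarrow> cmod (g \<omega>) \<le> a"
    "\<And>\<omega> \<omega>'. \<omega> \<in> shift_space N A \<Longrightarrow> \<omega>' \<in> shift_space N A \<Longrightarrow> \<omega> \<noteq> \<omega>' \<Longrightarrow>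
      cmod (g \<omega> - g \<omega>') \<le> b * dtheta \<theta> \<omega> \<omega>'"
  shows "0 \<le> F_norm N A \<theta> g" "F_norm N A \<theta> g \<le> a + b"
  using sup_norm_le[of a N A g] lip_const_le[of \<theta> b N A g] assms
  unfolding F_norm_def by (simp_all add: add_mono add_nonneg_nonneg)

lemma
  assumes "\<phi> \<in> F_space N A \<theta>"
  shows sup_norm_nonneg: "0 \<le> sup_norm N A \<phi>"
    and lip_const_nonneg: "0 \<le> lip_const N A \<theta> \<phi>"
  using assms unfolding F_space_def sup_norm_def lip_const_def by (auto intro: cSup_upper)

lemma norm_le_sup_norm:
  assumes "\<phi> \<in> F_space N A \<theta>" "\<omega> \<in> shift_space N A"
  shows "cmod (\<phi> \<omega>) \<le> sup_norm N A \<phi>"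
  using assms unfolding F_space_def sup_norm_def by (auto intro: cSup_upper)

lemma norm_diff_le_lip_const:
  assumes "\<phi> \<in> F_space N A \<theta>" "0 < \<theta>" "\<omega> \<in> shift_space N A" "\<omega>' \<in> shift_space N A"
  shows "cmod (\<phi> \<omega> - \<phi> \<omega>') \<le> lip_const N A \<theta> \<phi> * dtheta \<theta> \<omega> \<omega>'"
proof (cases "\<omega> = \<omega>'")
  case False
  have "cmod (\<phi> \<omega> - \<phi> \<omega>') / dtheta \<theta> \<omega> \<omega>' \<le> lip_const N A \<theta> \<phi>"
    using assms False unfolding F_space_def lip_const_def lip_set_def
    by (intro cSup_upper) auto
  then show ?thesis using dtheta_pos[OF assms(2) False] by (simp add: pos_divide_le_eq)
qed (use lip_const_nonneg[OF assms(1)] in \<open>simp add: dtheta_def\<close>)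

lemma norm_diff_le_lip_const_power:
  assumes "\<phi> \<in> F_space N A \<theta>" "0 < \<theta>" "\<theta> \<le> 1" "\<omega> \<in> shift_space N A" "\<omega>' \<in> shift_space N A"
    "\<forall>j<n. \<omega> j = \<omega>' j"
  shows "cmod (\<phi> \<omega> - \<phi> \<omega>') \<le> lip_const N A \<theta> \<phi> * \<theta> ^ n"
  using norm_diff_le_lip_const[OF assms(1,2,4,5)] dtheta_le_power[OF assms(2,3,6)]
    lip_const_nonneg[OF assms(1)] by (meson mult_left_mono order_trans)

lemma F_space_mono:
  assumes "\<phi> \<in> F_space N A \<theta>" "0 < \<theta>" "\<theta> \<le> \<theta>'"
  shows "\<phi> \<in> F_space N A \<theta>'" "F_norm N A \<theta>' \<phi> \<le> F_norm N A \<theta> \<phi>"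
proof -
  have "cmod (\<phi> \<omega> - \<phi> \<omega>') \<le> lip_const N A \<theta> \<phi> * dtheta \<theta>' \<omega> \<omega>'"
    if "\<omega> \<in> shift_space N A" "\<omega>' \<in> shift_space N A" "\<omega> \<noteq> \<omega>'" for \<omega> \<omega>'
    using norm_diff_le_lip_const[OF assms(1,2) that(1,2)] dtheta_le_ratio[OF assms(2,3) that(3), of 0]
      lip_const_nonneg[OF assms(1)] by (simp add: order_trans mult_left_mono)
  note lip = lip_const_le[OF _ lip_const_nonneg[OF assms(1)] this]
  show "\<phi> \<in> F_space N A \<theta>'" using assms lip(1) by (simp add: F_space_def)
  show "F_norm N A \<theta>' \<phi> \<le> F_norm N A \<theta> \<phi>" using assms lip(3) by (simp add: F_norm_def)
qed

lemma sum_lessThan_add: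
  fixes f :: "nat \<Rightarrow> 'a::comm_monoid_add"
  shows "(\<Sum>i<a + b. f i) = (\<Sum>i<a. f i) + (\<Sum>k<b. f (a + k))"
  by (induction b) (simp_all add: ac_simps)

definition word_code :: "nat \<Rightarrow> nat \<Rightarrow> (nat \<Rightarrow> nat) \<Rightarrow> nat" where
  "word_code N m \<omega> = (\<Sum>j<m. \<omega> j * N ^ j)"

lemma word_code_cong: "\<forall>j<m. \<omega> j = \<omega>' j \<Longrightarrow> word_code N m \<omega> = word_code N m \<omega>'"
  unfolding word_code_def by (intro sum.cong) auto

lemma word_code_less: "\<forall>j<m. \<omega> j < N \<Longrightarrow> word_code N m \<omega> < N ^ m"
proof (induction m)
  case (Suc m)
  have "word_code N (Suc m) \<omega> = word_code N m \<omega> + \<omega> m * N ^ m" by (simp add: word_code_def)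
  also have "\<dots> < (\<omega> m + 1) * N ^ m" using Suc by simp
  also have "\<dots> \<le> N * N ^ m" using Suc.prems by (intro mult_right_mono) (auto simp: Suc_le_eq)
  finally show ?case by simp
qed (simp add: word_code_def)

lemma word_code_inj:
  assumes "\<forall>j<m. \<omega> j < N" "\<forall>j<m. \<omega>' j < N" "word_code N m \<omega> = word_code N m \<omega>'"
  shows "\<forall>j<m. \<omega> j = \<omega>' j"
  using assms
proof (induction m)
  case (Suc m)
  have less: "word_code N m \<omega> < N ^ m" "word_code N m \<omega>' < N ^ m"
    using Suc.prems word_code_less by auto
  have eq: "word_code N m \<omega> + \<omega> m * N ^ m = word_code N m \<omega>' + \<omega>' m * N ^ m"
    using Suc.prems(3) by (simp add: word_code_def)
  then have "(word_code N m \<omega> + \<omega> m * N ^ m) mod N ^ m = (word_code N m \<omega>' + \<omega>' m * N ^ m) mod N ^ m"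
    by simp
  then have prefix: "word_code N m \<omega> = word_code N m \<omega>'" using less by simp
  then have "\<omega> m = \<omega>' m" using eq less by (auto simp: power_0_left)
  moreover have "\<forall>j<m. \<omega> j = \<omega>' j" using Suc.IH Suc.prems(1,2) prefix by simp
  ultimately show ?case by (simp add: less_Suc_eq)
qed simp

lemma shift_space_less: "\<omega> \<in> shift_space N A \<Longrightarrow> \<omega> j < N"
  unfolding shift_space_def by auto

definition prefix_point :: "nat \<Rightarrow> (nat \<Rightarrow> nat \<Rightarrow> nat) \<Rightarrow> nat \<Rightarrow> (nat \<Rightarrow> nat) \<Rightarrow> (nat \<Rightarrow> nat)" where
  "prefix_point N A m \<omega> = (SOME \<omega>'. \<omega>' \<in> shift_space N A \<and> (\<forall>j<m. \<omega>' j = \<omega> j))"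

lemma prefix_point_cong:
  assumes "\<forall>j<m. \<omega> j = \<omega>' j"
  shows "prefix_point N A m \<omega> = prefix_point N A m \<omega>'"
proof -
  have "(\<lambda>\<eta>. \<eta> \<in> shift_space N A \<and> (\<forall>j<m. \<eta> j = \<omega> j)) =
      (\<lambda>\<eta>. \<eta> \<in> shift_space N A \<and> (\<forall>j<m. \<eta> j = \<omega>' j))"
    using assms by auto
  then show ?thesis unfolding prefix_point_def by simp
qed

lemma prefix_point:
  assumes "\<omega> \<in> shift_space N A"
  shows "prefix_point N A m \<omega> \<in> shift_space N A" "\<forall>j<m. prefix_point N A m \<omega> j = \<omega> j"
  using someI_ex[of "\<lambda>\<omega>'. \<omega>' \<in> shift_space N A \<and> (\<forall>j<m. \<omega>' j = \<omega> j)"] assms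
  unfolding prefix_point_def by auto

definition cylinder_point :: "nat \<Rightarrow> (nat \<Rightarrow> nat \<Rightarrow> nat) \<Rightarrow> nat \<Rightarrow> nat \<Rightarrow> (nat \<Rightarrow> nat)" where
  "cylinder_point N A n k = (SOME \<omega>. \<omega> \<in> shift_space N A \<and> word_code N (Suc n) \<omega> = k)"

lemma cylinder_point:
  assumes "\<omega> \<in> shift_space N A" "word_code N (Suc n) \<omega> = k"
  shows "cylinder_point N A n k \<in> shift_space N A" "\<forall>j<Suc n. cylinder_point N A n k j = \<omega> j"
proof -
  note some = someI_ex[of "\<lambda>\<omega>. \<omega> \<in> shift_space N A \<and> word_code N (Suc n) \<omega> = k"]
  show in_shift: "cylinder_point N A n k \<in> shift_space N A"
    using some assms unfolding cylinder_point_def by blast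
  show "\<forall>j<Suc n. cylinder_point N A n k j = \<omega> j"
    using some assms in_shift shift_space_less unfolding cylinder_point_def
    by (intro word_code_inj[of _ _ N]) auto
qed

text \<open>The terms of the expansion are enumerated level by level: index 0 is the constant term, and the
  N^(n+1) indices from block_start N n on belong to the cylinders of length n+1, in the order of
  word_code.\<close>

fun block_start :: "nat \<Rightarrow> nat \<Rightarrow> nat" where
  "block_start N 0 = 1"
| "block_start N (Suc n) = block_start N n + N ^ Suc n"

definition block_level :: "nat \<Rightarrow> nat \<Rightarrow> nat" where
  "block_level N i = (LEAST n. i < block_start N (Suc n))"

definition block_offset :: "nat \<Rightarrow> nat \<Rightarrow> nat" where
  "block_offset N i = i - block_start N (block_level N i)"

lemma block_start_mono: "m \<le> n \<Longrightarrow> block_start N m \<le> block_start N n"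
  by (induction n) (auto simp: le_Suc_eq)

lemma block_start_ge: "0 < N \<Longrightarrow> n + 1 \<le> block_start N n"
proof (induction n)
  case (Suc n)
  have "n + 1 \<le> block_start N n" "0 < N ^ Suc n" using Suc by simp_all
  then show ?case by (simp only: block_start.simps)
qed simp

lemma block_level_zero: "block_level N 0 = 0"
  unfolding block_level_def by (rule Least_equality) auto

lemma block_level_offset:
  assumes "k < N ^ Suc n"
  shows "block_level N (block_start N n + k) = n" "block_offset N (block_start N n + k) = k"
proof -
  show level: "block_level N (block_start N n + k) = n"
    unfolding block_level_def
  proof (rule Least_equality)
    fix m assume "block_start N n + k < block_start N (Suc m)"
    then show "n \<le> m" using block_start_mono[of "Suc m" n N] by (cases "Suc m \<le> n") auto
  qed (use assms in simp)
  show "block_offset N (block_start N n + k) = k" unfolding block_offset_def level by simp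
qed

lemma block_level_bounds:
  assumes "0 < N" "1 \<le> K"
  shows "block_start N (block_level N K) \<le> K" "K < block_start N (Suc (block_level N K))"
proof -
  have "\<exists>n. K < block_start N (Suc n)"
    using block_start_ge[OF assms(1), of "Suc K"] by (intro exI[of _ K]) simp
  then show "K < block_start N (Suc (block_level N K))" unfolding block_level_def by (rule LeastI_ex)
  show "block_start N (block_level N K) \<le> K"
  proof (cases "block_level N K")
    case (Suc p)
    then have "\<not> K < block_start N (Suc p)"
      using not_less_Least[of p "\<lambda>n. K < block_start N (Suc n)"] unfolding block_level_def by simp
    then show ?thesis using Suc by simp
  qed (use assms in simp)
qed

lemma le_block_level: "0 < N \<Longrightarrow> block_start N m \<le> K \<Longrightarrow> m \<le> block_level N K"
  using block_level_bounds[of N K] block_start_ge[of N m] block_start_mono[of "Suc (block_level N K)" m N]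
  by fastforce

definition expansion_weight :: "nat \<Rightarrow> real \<Rightarrow> real \<Rightarrow> nat \<Rightarrow> complex" where
  "expansion_weight N \<theta> \<theta>' i = complex_of_real ((\<theta> / \<theta>') ^ block_level N i)"

definition expansion_functional ::
  "nat \<Rightarrow> (nat \<Rightarrow> nat \<Rightarrow> nat) \<Rightarrow> real \<Rightarrow> nat \<Rightarrow> ((nat \<Rightarrow> nat) \<Rightarrow> complex) \<Rightarrow> complex" where
  "expansion_functional N A \<theta> i \<phi> =
    (let n = block_level N i; \<eta> = cylinder_point N A n (block_offset N i) in
     if i = 0 then \<phi> (prefix_point N A 0 (\<lambda>_. 0))
     else if \<eta> \<in> shift_space N A \<and> word_code N (Suc n) \<eta> = block_offset N i
     then (\<phi> (prefix_point N A (Suc n) \<eta>) - \<phi> (prefix_point N A n \<eta>)) / complex_of_real (\<theta> ^ n)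
     else 0)"

definition expansion_vector :: "nat \<Rightarrow> (nat \<Rightarrow> nat \<Rightarrow> nat) \<Rightarrow> real \<Rightarrow> nat \<Rightarrow> (nat \<Rightarrow> nat) \<Rightarrow> complex" where
  "expansion_vector N A \<theta>' i \<omega> =
    (if \<omega> \<in> shift_space N A \<and> (i = 0 \<or> word_code N (Suc (block_level N i)) \<omega> = block_offset N i)
     then complex_of_real (\<theta>' ^ block_level N i) else 0)"

definition expansion_sum ::
  "nat \<Rightarrow> (nat \<Rightarrow> nat \<Rightarrow> nat) \<Rightarrow> real \<Rightarrow> real \<Rightarrow> nat \<Rightarrow> ((nat \<Rightarrow> nat) \<Rightarrow> complex) \<Rightarrow> (nat \<Rightarrow> nat) \<Rightarrow> complex" where
  "expansion_sum N A \<theta> \<theta>' K \<phi> \<omega> =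
    (\<Sum>i<K. expansion_weight N \<theta> \<theta>' i * expansion_functional N A \<theta> i \<phi> * expansion_vector N A \<theta>' i \<omega>)"

lemma expansion_term_zero:
  assumes "\<omega> \<in> shift_space N A"
  shows "expansion_weight N \<theta> \<theta>' 0 * expansion_functional N A \<theta> 0 \<phi> * expansion_vector N A \<theta>' 0 \<omega>
    = \<phi> (prefix_point N A 0 \<omega>)"
  using assms prefix_point_cong[of 0 "\<lambda>_. 0" \<omega> N A]
  by (simp add: expansion_weight_def expansion_functional_def expansion_vector_def block_level_zero)

lemma expansion_term_block:
  assumes "0 < N" "0 < \<theta>" "0 < \<theta>'" "\<omega> \<in> shift_space N A" "k < N ^ Suc n"
  defines "i \<equiv> block_start N n + k"
  shows "expansion_weight N \<theta> \<theta>' i * expansion_functional N A \<theta> i \<phi> * expansion_vector N A \<theta>' i \<omega> =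
    (if word_code N (Suc n) \<omega> = k
     then \<phi> (prefix_point N A (Suc n) \<omega>) - \<phi> (prefix_point N A n \<omega>) else 0)"
proof (cases "word_code N (Suc n) \<omega> = k")
  case True
  define \<eta> where "\<eta> = cylinder_point N A n k"
  define \<Delta> where "\<Delta> = \<phi> (prefix_point N A (Suc n) \<omega>) - \<phi> (prefix_point N A n \<omega>)"
  note \<eta> = cylinder_point[OF assms(4) True, folded \<eta>_def]
  have "prefix_point N A m \<eta> = prefix_point N A m \<omega>" if "m \<le> Suc n" for m
    using \<eta>(2) that by (intro prefix_point_cong) auto
  moreover have "word_code N (Suc n) \<eta> = k" using \<eta>(2) True word_code_cong[of "Suc n" \<eta> \<omega> N] by simp
  moreover have "i \<noteq> 0" using block_start_ge[OF assms(1), of n] unfolding i_def by simp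
  ultimately have "expansion_weight N \<theta> \<theta>' i * expansion_functional N A \<theta> i \<phi> * expansion_vector N A \<theta>' i \<omega>
      = complex_of_real ((\<theta> / \<theta>') ^ n) * (\<Delta> / complex_of_real (\<theta> ^ n)) * complex_of_real (\<theta>' ^ n)"
    using \<eta>(1) True assms(4) block_level_offset[OF assms(5)] unfolding i_def[symmetric] \<Delta>_def
    by (simp add: expansion_weight_def expansion_functional_def expansion_vector_def \<eta>_def Let_def)
  also have "\<dots> = \<Delta>"
  proof -
    have "(\<theta> / \<theta>') ^ n * \<theta>' ^ n = \<theta> ^ n" using assms(3) by (simp add: power_divide)
    then have "(\<theta> / \<theta>') ^ n * \<theta>' ^ n / \<theta> ^ n = 1" using assms(2) by simp
    then have "complex_of_real ((\<theta> / \<theta>') ^ n * \<theta>' ^ n / \<theta> ^ n) = 1" by (metis of_real_1)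
    then show ?thesis
      by (simp only: of_real_mult of_real_divide of_real_inverse divide_inverse ac_simps mult_1_left mult_1_right)
  qed
  finally show ?thesis using True unfolding \<Delta>_def by simp
next
  case False
  then show ?thesis using block_level_offset[OF assms(5)] block_start_ge[OF assms(1), of n]
    by (simp add: expansion_vector_def i_def)
qed

lemma expansion_sum_block_step:
  assumes "0 < N" "0 < \<theta>" "0 < \<theta>'" "\<omega> \<in> shift_space N A" "k \<le> N ^ Suc n"
  shows "expansion_sum N A \<theta> \<theta>' (block_start N n + k) \<phi> \<omega> = expansion_sum N A \<theta> \<theta>' (block_start N n) \<phi> \<omega> +
    (if word_code N (Suc n) \<omega> < k
     then \<phi> (prefix_point N A (Suc n) \<omega>) - \<phi> (prefix_point N A n \<omega>) else 0)"
proof -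
  define \<Delta> where "\<Delta> = \<phi> (prefix_point N A (Suc n) \<omega>) - \<phi> (prefix_point N A n \<omega>)"
  have "expansion_sum N A \<theta> \<theta>' (block_start N n + k) \<phi> \<omega> = expansion_sum N A \<theta> \<theta>' (block_start N n) \<phi> \<omega> +
      (\<Sum>j<k. if word_code N (Suc n) \<omega> = j then \<Delta> else 0)"
    unfolding expansion_sum_def sum_lessThan_add \<Delta>_def using assms
    by (intro arg_cong2[where f = "(+)"] sum.cong expansion_term_block) auto
  then show ?thesis by (simp add: \<Delta>_def)
qed

lemma expansion_sum_block_start:
  assumes "0 < N" "0 < \<theta>" "0 < \<theta>'" "\<omega> \<in> shift_space N A"
  shows "expansion_sum N A \<theta> \<theta>' (block_start N n) \<phi> \<omega> = \<phi> (prefix_point N A n \<omega>)"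
proof (induction n)
  case 0
  show ?case using expansion_term_zero[OF assms(4)] by (simp add: expansion_sum_def)
next
  case (Suc n)
  have "word_code N (Suc n) \<omega> < N ^ Suc n" using assms(4) by (intro word_code_less) (simp add: shift_space_less)
  then show ?case
    using expansion_sum_block_step[OF assms, of "N ^ Suc n" n] Suc by simp
qed

lemma expansion_sum_eq:
  assumes "0 < N" "0 < \<theta>" "0 < \<theta>'" "\<omega> \<in> shift_space N A" "1 \<le> K"
  defines "n \<equiv> block_level N K"
  shows "expansion_sum N A \<theta> \<theta>' K \<phi> \<omega> =
    (if word_code N (Suc n) \<omega> < K - block_start N n
     then \<phi> (prefix_point N A (Suc n) \<omega>) else \<phi> (prefix_point N A n \<omega>))"
proof -
  define k where "k = K - block_start N n"
  have K: "K = block_start N n + k" "k \<le> N ^ Suc n"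
    using block_level_bounds[OF assms(1,5), folded n_def] unfolding k_def by auto
  show ?thesis
    unfolding K(1) k_def[symmetric] expansion_sum_block_step[OF assms(1-4) K(2)]
      expansion_sum_block_start[OF assms(1-4)] by simp
qed

lemma norm_diff_cylinder_sample_le:
  assumes "\<phi> \<in> F_space N A \<theta>" "0 < \<theta>" "\<theta> \<le> 1" "\<omega> \<in> shift_space N A"
    and sample: "\<exists>\<omega>'\<in>shift_space N A. (\<forall>j<n. \<omega>' j = \<omega> j) \<and> \<psi> \<omega> = \<phi> \<omega>'"
  shows "cmod (\<phi> \<omega> - \<psi> \<omega>) \<le> lip_const N A \<theta> \<phi> * \<theta> ^ n"
proof -
  obtain \<omega>' where "\<omega>' \<in> shift_space N A" "\<forall>j<n. \<omega> j = \<omega>' j" "\<psi> \<omega> = \<phi> \<omega>'"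
    using sample by auto
  then show ?thesis using norm_diff_le_lip_const_power[OF assms(1-4), of \<omega>' n] by simp
qed

lemma lipschitz_diff_cylinder_sample:
  assumes "\<phi> \<in> F_space N A \<theta>" "0 < \<theta>" "\<theta> \<le> \<theta>'" "\<theta>' \<le> 1"
    and \<omega>: "\<omega> \<in> shift_space N A" "\<omega>' \<in> shift_space N A" "\<omega> \<noteq> \<omega>'"
    and sample: "\<And>\<omega>. \<omega> \<in> shift_space N A \<Longrightarrow> \<exists>\<omega>'\<in>shift_space N A. (\<forall>j<n. \<omega>' j = \<omega> j) \<and> \<psi> \<omega> = \<phi> \<omega>'"
    and cylinder_const: "\<forall>j<Suc n. \<omega> j = \<omega>' j \<Longrightarrow> \<psi> \<omega> = \<psi> \<omega>'"
  shows "cmod ((\<phi> \<omega> - \<psi> \<omega>) - (\<phi> \<omega>' - \<psi> \<omega>'))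
    \<le> 2 * lip_const N A \<theta> \<phi> * (\<theta> / \<theta>') ^ n * dtheta \<theta>' \<omega> \<omega>'"
proof -
  define L where "L = lip_const N A \<theta> \<phi>"
  define r where "r = \<theta> / \<theta>'"
  have "0 \<le> L" "0 < \<theta>'" "0 \<le> r" "\<theta> \<le> 1"
    using lip_const_nonneg[OF assms(1)] assms(2-4) by (auto simp: L_def r_def)
  show ?thesis
  proof (cases "\<forall>j<Suc n. \<omega> j = \<omega>' j")
    case True
    have "cmod ((\<phi> \<omega> - \<psi> \<omega>) - (\<phi> \<omega>' - \<psi> \<omega>')) = cmod (\<phi> \<omega> - \<phi> \<omega>')"
      using cylinder_const[OF True] by simp
    also have "\<dots> \<le> L * dtheta \<theta> \<omega> \<omega>'"
      using norm_diff_le_lip_const[OF assms(1,2) \<omega>(1,2)] by (simp add: L_def)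
    also have "\<dots> \<le> L * (r ^ n * dtheta \<theta>' \<omega> \<omega>')"
      using dtheta_le_ratio[OF assms(2,3) \<omega>(3), of n] True \<open>0 \<le> L\<close> unfolding r_def by (intro mult_left_mono) auto
    also have "\<dots> \<le> 2 * L * r ^ n * dtheta \<theta>' \<omega> \<omega>'"
      using \<open>0 \<le> L\<close> \<open>0 \<le> r\<close> dtheta_pos[OF \<open>0 < \<theta>'\<close> \<omega>(3)] by simp
    finally show ?thesis unfolding L_def r_def .
  next
    case False
    then obtain j where "j \<le> n" "\<omega> j \<noteq> \<omega>' j" by (auto simp: less_Suc_eq_le)
    then have "\<theta>' ^ n \<le> dtheta \<theta>' \<omega> \<omega>'" using \<open>0 < \<theta>'\<close> assms(4) by (intro power_le_dtheta)
    have "cmod ((\<phi> \<omega> - \<psi> \<omega>) - (\<phi> \<omega>' - \<psi> \<omega>')) \<le> cmod (\<phi> \<omega> - \<psi> \<omega>) + cmod (\<phi> \<omega>' - \<psi> \<omega>')"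
      by (rule norm_triangle_ineq4)
    also have "\<dots> \<le> 2 * L * \<theta> ^ n"
      using norm_diff_cylinder_sample_le[where \<psi> = \<psi>, OF assms(1,2) \<open>\<theta> \<le> 1\<close> \<omega>(1) sample[OF \<omega>(1)]]
        norm_diff_cylinder_sample_le[where \<psi> = \<psi>, OF assms(1,2) \<open>\<theta> \<le> 1\<close> \<omega>(2) sample[OF \<omega>(2)]] unfolding L_def by simp
    also have "\<dots> = 2 * L * r ^ n * \<theta>' ^ n" using \<open>0 < \<theta>'\<close> unfolding r_def by (simp add: power_divide)
    also have "\<dots> \<le> 2 * L * r ^ n * dtheta \<theta>' \<omega> \<omega>'"
      using \<open>\<theta>' ^ n \<le> dtheta \<theta>' \<omega> \<omega>'\<close> \<open>0 \<le> L\<close> \<open>0 \<le> r\<close> by (intro mult_left_mono) auto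
    finally show ?thesis unfolding L_def r_def .
  qed
qed

lemma F_norm_diff_cylinder_sample_le:
  assumes "\<phi> \<in> F_space N A \<theta>" "0 < \<theta>" "\<theta> \<le> \<theta>'" "\<theta>' \<le> 1"
    and sample: "\<And>\<omega>. \<omega> \<in> shift_space N A \<Longrightarrow> \<exists>\<omega>'\<in>shift_space N A. (\<forall>j<n. \<omega>' j = \<omega> j) \<and> \<psi> \<omega> = \<phi> \<omega>'"
    and cylinder_const: "\<And>\<omega> \<omega>'. \<omega> \<in> shift_space N A \<Longrightarrow> \<omega>' \<in> shift_space N A \<Longrightarrow>
      \<forall>j<Suc n. \<omega> j = \<omega>' j \<Longrightarrow> \<psi> \<omega> = \<psi> \<omega>'"
  shows "0 \<le> F_norm N A \<theta>' (\<lambda>t. \<phi> t - \<psi> t)"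
    "F_norm N A \<theta>' (\<lambda>t. \<phi> t - \<psi> t) \<le> 3 * lip_const N A \<theta> \<phi> * (\<theta> / \<theta>') ^ n"
proof -
  define L where "L = lip_const N A \<theta> \<phi>"
  define r where "r = \<theta> / \<theta>'"
  have "0 \<le> L" "0 < \<theta>'" "\<theta> \<le> 1" using lip_const_nonneg[OF assms(1)] assms(2-4) by (auto simp: L_def)
  have "\<theta> \<le> r" using assms(2-4) \<open>0 < \<theta>'\<close> unfolding r_def by (simp add: le_divide_eq mult_le_cancel_left1)
  then have r: "0 \<le> r" "\<theta> ^ n \<le> r ^ n" using assms(2) by (auto intro: power_mono)
  have sup: "cmod (\<phi> \<omega> - \<psi> \<omega>) \<le> L * r ^ n" if "\<omega> \<in> shift_space N A" for \<omega>
    using norm_diff_cylinder_sample_le[where \<psi> = \<psi>, OF assms(1,2) \<open>\<theta> \<le> 1\<close> that sample[OF that]] r(2) \<open>0 \<le> L\<close>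
    unfolding L_def by (meson mult_left_mono order_trans)
  have lip: "cmod ((\<phi> \<omega> - \<psi> \<omega>) - (\<phi> \<omega>' - \<psi> \<omega>')) \<le> 2 * L * r ^ n * dtheta \<theta>' \<omega> \<omega>'"
    if "\<omega> \<in> shift_space N A" "\<omega>' \<in> shift_space N A" "\<omega> \<noteq> \<omega>'" for \<omega> \<omega>'
    using lipschitz_diff_cylinder_sample[OF assms(1-4) that sample cylinder_const[OF that(1,2)]]
    unfolding L_def r_def .
  note bounds = F_norm_le[of \<theta>' "L * r ^ n" "2 * L * r ^ n" N A "\<lambda>t. \<phi> t - \<psi> t", OF \<open>0 < \<theta>'\<close> _ _ sup lip]
  show "0 \<le> F_norm N A \<theta>' (\<lambda>t. \<phi> t - \<psi> t)" using bounds(1) \<open>0 \<le> L\<close> r(1) by simp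
  show "F_norm N A \<theta>' (\<lambda>t. \<phi> t - \<psi> t) \<le> 3 * lip_const N A \<theta> \<phi> * (\<theta> / \<theta>') ^ n"
    using bounds(2) \<open>0 \<le> L\<close> r(1) unfolding L_def[symmetric] r_def[symmetric] by simp
qed

lemma expansion_sum_cylinder_sample:
  assumes "0 < N" "0 < \<theta>" "0 < \<theta>'" "\<omega> \<in> shift_space N A" "1 \<le> K"
  shows "\<exists>\<omega>'\<in>shift_space N A. (\<forall>j<block_level N K. \<omega>' j = \<omega> j) \<and> expansion_sum N A \<theta> \<theta>' K \<phi> \<omega> = \<phi> \<omega>'"
proof -
  define n where "n = block_level N K"
  obtain m where "m \<in> {n, Suc n}" "expansion_sum N A \<theta> \<theta>' K \<phi> \<omega> = \<phi> (prefix_point N A m \<omega>)"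
    using expansion_sum_eq[OF assms, of \<phi>, folded n_def] by (cases "word_code N (Suc n) \<omega> < K - block_start N n") auto
  then show ?thesis
    using prefix_point[OF assms(4), of m] unfolding n_def[symmetric] by (intro bexI[of _ "prefix_point N A m \<omega>"]) auto
qed

lemma expansion_sum_cylinder_const:
  assumes "0 < N" "0 < \<theta>" "0 < \<theta>'" "\<omega> \<in> shift_space N A" "\<omega>' \<in> shift_space N A" "1 \<le> K"
    and agree: "\<forall>j<Suc (block_level N K). \<omega> j = \<omega>' j"
  shows "expansion_sum N A \<theta> \<theta>' K \<phi> \<omega> = expansion_sum N A \<theta> \<theta>' K \<phi> \<omega>'"
proof -
  have "\<forall>j<block_level N K. \<omega> j = \<omega>' j" using agree by simp
  then show ?thesis
    using expansion_sum_eq[OF assms(1-4,6)] expansion_sum_eq[OF assms(1-3,5,6)] word_code_cong[OF agree, of N]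
      prefix_point_cong[OF agree, of N A] prefix_point_cong[of "block_level N K" \<omega> \<omega>' N A] by simp
qed

lemma expansion_sum_tendsto:
  assumes "0 < N" "0 < \<theta>" "\<theta> < \<theta>'" "\<theta>' \<le> 1" "\<phi> \<in> F_space N A \<theta>"
  shows "(\<lambda>K. F_norm N A \<theta>' (\<lambda>t. \<phi> t - expansion_sum N A \<theta> \<theta>' K \<phi> t)) \<longlonglongrightarrow> 0"
proof (rule Lim_null_comparison)
  have "0 < \<theta>'" using assms(2,3) by linarith
  have "0 \<le> F_norm N A \<theta>' (\<lambda>t. \<phi> t - expansion_sum N A \<theta> \<theta>' K \<phi> t) \<and>
      F_norm N A \<theta>' (\<lambda>t. \<phi> t - expansion_sum N A \<theta> \<theta>' K \<phi> t)
        \<le> 3 * lip_const N A \<theta> \<phi> * (\<theta> / \<theta>') ^ block_level N K" if "1 \<le> K" for K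
    using F_norm_diff_cylinder_sample_le[OF assms(5,2) less_imp_le[OF assms(3)] assms(4)
        expansion_sum_cylinder_sample[OF assms(1,2) \<open>0 < \<theta>'\<close> _ that]
        expansion_sum_cylinder_const[OF assms(1,2) \<open>0 < \<theta>'\<close> _ _ that]]
    by blast
  then show "\<forall>\<^sub>F K in sequentially. norm (F_norm N A \<theta>' (\<lambda>t. \<phi> t - expansion_sum N A \<theta> \<theta>' K \<phi> t))
      \<le> 3 * lip_const N A \<theta> \<phi> * (\<theta> / \<theta>') ^ block_level N K"
    unfolding eventually_sequentially by (intro exI[of _ 1]) simp
  have "filterlim (block_level N) sequentially sequentially"
    unfolding filterlim_at_top eventually_sequentially using le_block_level[OF assms(1)] by blast
  moreover have "(\<lambda>n. (\<theta> / \<theta>') ^ n) \<longlonglongrightarrow> 0" using assms(2,3) by (intro LIMSEQ_power_zero) auto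
  ultimately show "(\<lambda>K. 3 * lip_const N A \<theta> \<phi> * (\<theta> / \<theta>') ^ block_level N K) \<longlonglongrightarrow> 0"
    by (intro tendsto_mult_right_zero) (rule filterlim_compose)
qed

lemma sum_norm_expansion_weight_block_start:
  assumes "0 < \<theta>" "0 < \<theta>'"
  shows "(\<Sum>i<block_start N n. cmod (expansion_weight N \<theta> \<theta>' i)) =
    1 + (\<Sum>m<n. real N ^ Suc m * (\<theta> / \<theta>') ^ m)"
proof (induction n)
  case 0
  show ?case using assms by (simp add: expansion_weight_def block_level_zero)
next
  case (Suc n)
  have "cmod (expansion_weight N \<theta> \<theta>' (block_start N n + k)) = (\<theta> / \<theta>') ^ n" if "k < N ^ Suc n" for k
    using assms block_level_offset(1)[OF that] by (simp add: expansion_weight_def norm_power norm_divide)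
  then show ?case using Suc by (simp add: sum_lessThan_add del: power_Suc)
qed

lemma summable_norm_expansion_weight:
  assumes "0 < N" "0 < \<theta>" "0 < \<theta>'" "real N * \<theta> < \<theta>'"
  shows "summable (\<lambda>i. cmod (expansion_weight N \<theta> \<theta>' i))"
proof (rule summableI_nonneg_bounded)
  define q where "q = real N * (\<theta> / \<theta>')"
  have q: "0 \<le> q" "q < 1" using assms unfolding q_def by (auto simp: field_simps)
  fix K
  have "(\<Sum>i<K. cmod (expansion_weight N \<theta> \<theta>' i)) \<le> (\<Sum>i<block_start N K. cmod (expansion_weight N \<theta> \<theta>' i))"
    using block_start_ge[OF assms(1), of K] by (intro sum_mono2) auto
  also have "\<dots> = 1 + real N * (\<Sum>m<K. q ^ m)"
    unfolding sum_norm_expansion_weight_block_start[OF assms(2,3)] sum_distrib_left q_def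
    by (simp only: power_mult_distrib power_Suc mult.assoc)
  also have "\<dots> \<le> 1 + real N * (1 / (1 - q))"
  proof -
    have "(\<Sum>m<K. q ^ m) \<le> 1 / (1 - q)" using q by (simp add: sum_gp_strict divide_right_mono)
    from mult_left_mono[OF this, of "real N"] show ?thesis by simp
  qed
  finally show "(\<Sum>i<K. cmod (expansion_weight N \<theta> \<theta>' i)) \<le> 1 + real N * (1 / (1 - q))" .
qed simp

lemma expansion_functional_linear:
  "expansion_functional N A \<theta> i (\<lambda>t. \<phi> t + \<psi> t) = expansion_functional N A \<theta> i \<phi> + expansion_functional N A \<theta> i \<psi>"
  "expansion_functional N A \<theta> i (\<lambda>t. c * \<phi> t) = c * expansion_functional N A \<theta> i \<phi>"
  unfolding expansion_functional_def Let_def by (simp_all add: diff_divide_distrib add_divide_distrib algebra_simps)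

lemma norm_expansion_functional_le:
  assumes "\<phi> \<in> F_space N A \<theta>" "0 < \<theta>" "\<theta> \<le> 1"
  shows "cmod (expansion_functional N A \<theta> i \<phi>) \<le> F_norm N A \<theta> \<phi>"
proof -
  define n where "n = block_level N i"
  define \<eta> where "\<eta> = cylinder_point N A n (block_offset N i)"
  have S: "0 \<le> sup_norm N A \<phi>" and L: "0 \<le> lip_const N A \<theta> \<phi>"
    using sup_norm_nonneg[OF assms(1)] lip_const_nonneg[OF assms(1)] .
  consider "i = 0" | "i \<noteq> 0" "\<eta> \<in> shift_space N A" | "i \<noteq> 0" "\<eta> \<notin> shift_space N A" by blast
  then show ?thesis
  proof cases
    case 1
    have "cmod (\<phi> \<omega>) \<le> sup_norm N A \<phi>" for \<omega>
      using norm_le_sup_norm[OF assms(1), of \<omega>] assms(1) S by (cases "\<omega> \<in> shift_space N A") (auto simp: F_space_def)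
    then show ?thesis using 1 L by (simp add: expansion_functional_def F_norm_def add_increasing2)
  next
    case 2
    have "\<forall>j<n. prefix_point N A (Suc n) \<eta> j = prefix_point N A n \<eta> j"
      using prefix_point(2)[OF 2(2)] by simp
    then have "cmod (\<phi> (prefix_point N A (Suc n) \<eta>) - \<phi> (prefix_point N A n \<eta>)) \<le> lip_const N A \<theta> \<phi> * \<theta> ^ n"
      using prefix_point(1)[OF 2(2)] by (intro norm_diff_le_lip_const_power[OF assms]) auto
    then have "cmod ((\<phi> (prefix_point N A (Suc n) \<eta>) - \<phi> (prefix_point N A n \<eta>)) / complex_of_real (\<theta> ^ n))
        \<le> lip_const N A \<theta> \<phi>"
      using assms(2) by (simp add: norm_divide norm_power pos_divide_le_eq)
    then show ?thesis
      using 2 S L unfolding expansion_functional_def Let_def n_def[symmetric] \<eta>_def[symmetric] F_norm_def by auto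
  next
    case 3
    then show ?thesis
      using S L unfolding expansion_functional_def Let_def n_def[symmetric] \<eta>_def[symmetric] F_norm_def by auto
  qed
qed

lemma expansion_vector_F_space:
  assumes "0 < \<theta>'" "\<theta>' \<le> 1"
  shows "expansion_vector N A \<theta>' i \<in> F_space N A \<theta>'" "F_norm N A \<theta>' (expansion_vector N A \<theta>' i) \<le> 2"
proof -
  define n where "n = block_level N i"
  have "\<theta>' ^ n \<le> 1" using assms by (simp add: power_le_one)
  then have sup: "cmod (expansion_vector N A \<theta>' i \<omega>) \<le> 1" for \<omega>
    using assms by (simp add: expansion_vector_def norm_power n_def)
  have lip: "cmod (expansion_vector N A \<theta>' i \<omega> - expansion_vector N A \<theta>' i \<omega>') \<le> 1 * dtheta \<theta>' \<omega> \<omega>'"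
    if \<omega>: "\<omega> \<in> shift_space N A" "\<omega>' \<in> shift_space N A" "\<omega> \<noteq> \<omega>'" for \<omega> \<omega>'
  proof (cases "expansion_vector N A \<theta>' i \<omega> = expansion_vector N A \<theta>' i \<omega>'")
    case False
    then have "i \<noteq> 0" "word_code N (Suc n) \<omega> \<noteq> word_code N (Suc n) \<omega>'"
      using \<omega> by (auto simp: expansion_vector_def n_def)
    then obtain j where "j < Suc n" "\<omega> j \<noteq> \<omega>' j" using word_code_cong[of "Suc n" \<omega> \<omega>' N] by auto
    then have "\<theta>' ^ n \<le> dtheta \<theta>' \<omega> \<omega>'" using assms by (intro power_le_dtheta) auto
    moreover have "cmod (expansion_vector N A \<theta>' i \<omega> - expansion_vector N A \<theta>' i \<omega>') = \<theta>' ^ n"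
      using False \<omega> assms by (auto simp: expansion_vector_def n_def norm_power)
    ultimately show ?thesis by simp
  qed (use dtheta_pos[OF assms(1) \<omega>(3)] in simp)
  note sup_bounds = sup_norm_le[of 1 N A "expansion_vector N A \<theta>' i", OF _ sup]
  note lip_bounds = lip_const_le[of \<theta>' 1 N A "expansion_vector N A \<theta>' i", OF assms(1) _ lip]
  show "expansion_vector N A \<theta>' i \<in> F_space N A \<theta>'"
    using sup_bounds(1) lip_bounds(1) by (simp add: F_space_def expansion_vector_def)
  show "F_norm N A \<theta>' (expansion_vector N A \<theta>' i) \<le> 2"
    using sup_bounds(3) lip_bounds(3) by (simp add: F_norm_def)
qed

lemma nuclear_inclusion:
  assumes "0 < N" "0 < \<theta>" "\<theta>' \<le> 1" "real N * \<theta> < \<theta>'"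
  shows "nuclear_op (F_space N A \<theta>) (F_norm N A \<theta>) (F_space N A \<theta>') (F_norm N A \<theta>') (\<lambda>\<phi>. \<phi>)"
proof -
  have "\<theta> \<le> real N * \<theta>" using assms(1,2) by simp
  then have "\<theta> < \<theta>'" "0 < \<theta>'" "\<theta> \<le> 1" using assms by linarith+
  have F_norm_nonneg: "0 \<le> F_norm N A \<theta> \<phi>" if "\<phi> \<in> F_space N A \<theta>" for \<phi>
    using sup_norm_nonneg[OF that] lip_const_nonneg[OF that] by (simp add: F_norm_def)
  have inclusion: "\<phi> \<in> F_space N A \<theta>'" "F_norm N A \<theta>' \<phi> \<le> 2 * F_norm N A \<theta> \<phi>"
    if "\<phi> \<in> F_space N A \<theta>" for \<phi>
    using F_space_mono[OF that assms(2) less_imp_le[OF \<open>\<theta> < \<theta>'\<close>]] F_norm_nonneg[OF that] by simp_all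
  have functional_bound: "cmod (expansion_functional N A \<theta> i \<phi>) \<le> 2 * F_norm N A \<theta> \<phi>"
    if "\<phi> \<in> F_space N A \<theta>" for \<phi> i
    using norm_expansion_functional_le[OF that assms(2) \<open>\<theta> \<le> 1\<close>, of i] F_norm_nonneg[OF that] by simp
  have convergence: "(\<lambda>K. F_norm N A \<theta>' (\<lambda>t. \<phi> t - (\<Sum>n<K. expansion_weight N \<theta> \<theta>' n *
      expansion_functional N A \<theta> n \<phi> * expansion_vector N A \<theta>' n t))) \<longlonglongrightarrow> 0"
    if "\<phi> \<in> F_space N A \<theta>" for \<phi>
    using expansion_sum_tendsto[OF assms(1,2) \<open>\<theta> < \<theta>'\<close> assms(3) that] by (simp add: expansion_sum_def)
  show ?thesis
    unfolding nuclear_op_def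
    by (intro conjI ballI allI exI[of _ "2::real"] exI[of _ "expansion_weight N \<theta> \<theta>'"]
        exI[of _ "expansion_functional N A \<theta>"] exI[of _ "expansion_vector N A \<theta>'"])
      (simp_all add: inclusion summable_norm_expansion_weight[OF assms(1,2) \<open>0 < \<theta>'\<close> assms(4)]
        expansion_functional_linear functional_bound expansion_vector_F_space[OF \<open>0 < \<theta>'\<close> assms(3)]
        convergence)
qed

theorem lemmaB3:
  fixes N :: nat and A :: "nat \<Rightarrow> nat \<Rightarrow> nat" and \<theta> \<theta>' :: real
  assumes "zero_one_matrix N A" and "aperiodic_matrix N A"
    and "0 < \<theta>" and "\<theta> < 1" and "0 < \<theta>'" and "\<theta>' < 1"
    and "\<theta> < \<theta>' / real N"
  shows "nuclear_op (F_space N A \<theta>) (F_norm N A \<theta>) (F_space N A \<theta>') (F_norm N A \<theta>') (\<lambda>\<phi>. \<phi>)"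
proof (rule nuclear_inclusion)
  show "0 < N" using assms(3,7) by (cases "N = 0") auto
  then show "real N * \<theta> < \<theta>'" using assms(7) by (simp add: less_divide_eq mult.commute)
qed (use assms in auto)

end
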